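(* Let $A$ be a finite set of atoms, and let $t,s$ be nominal terms of the same sort and $\nabla$ a freshness context, all based on $A$. If $\{X:t\triangleq s\};\emptyset;\emptyset;\varepsilon\Longrightarrow^{+}\emptyset;S;\Gamma;\sigma$ is a derivation of the algorithm $\mathfrak N$ (with parameters $A$ and $\nabla$, $X$ a fresh variable), then $\langle\Gamma,X\sigma\rangle$ is an $A$-based generalization of $\langle\nabla,t\rangle$ and $\langle\nabla,s\rangle$.
   Context: Nominal terms $t::=f(t_1,\dots,t_n)\mid a\mid a.t\mid \pi\cdot X$ over sorted atoms, variables and function symbols; $\pi$ is a permutation (finite sequence of swappings $(a\,b)$ of same-sorted atoms; $\mathit{Id}$ the empty one, $\pi^{-1}$ the reversed sequence); $\pi\bullet t$ is the swapping action ($(a\,b)$ exchanges $a,b$ everywhere, $(a\,b)\bullet(\pi\cdot X)=((a\,b)\pi)\cdot X$, sequences act right to left); a permutation denotes a bijection on atoms. $\mathrm{Atoms}(\cdot)$ is the set of atoms occurring. Substitutions map variables to terms of the same sort, application $t\sigma$ allows atom capture and $(\pi\cdot X)\sigma=\pi\bullet(X\sigma)$; $\sigma\vartheta$ is composition (first $\sigma$), $\varepsilon$ the identity. A freshness context is a finite set of constraints $a\# X$. Judgments: $\nabla\vdash a\approx a$; $\nabla\vdash a.t\approx a.t'$ if $\nabla\vdash t\approx t'$; $\nabla\vdash a.t\approx a'.t'$ if $a\neq a'$, $\nabla\vdash t\approx(a\,a')\bullet t'$ and $\nabla\vdash a\# t'$; $\nabla\vdash\pi\cdot X\approx\pi'\cdot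 X$ if $a\# X\in\nabla$ for all $a$ with $\pi\bullet a\neq\pi'\bullet a$; applications componentwise; $\nabla\vdash a\# a'$ if $a\ne a'$; $\nabla\vdash a\#\pi\cdot X$ if $\pi^{-1}\bullet a\# X\in\nabla$; $a\#$ distributes over applications; $\nabla\vdash a\# a.t$; $\nabla\vdash a\# a'.t$ if $a\ne a'$ and $\nabla\vdash a\# t$. ${\sf FC}(F)$ for a finite set $F$ of formulas $a\# t$: starting from $F;\emptyset$ apply as long as possible $\{a\# b\}\uplus F';\Delta\Rightarrow F';\Delta$ ($a\neq b$); $\{a\# a.t\}\uplus F';\Delta\Rightarrow F';\Delta$; $\{a\# b.t\}\uplus F';\Delta\Rightarrow\{a\# t\}\cup F';\Delta$ ($a\neq b$); $\{a\# f(t_1,..,t_n)\}\uplus F';\Delta\Rightarrow\{a\# t_1,..,a\# t_n\}\cup F';\Delta$; $\{a\#\pi\cdot X\}\uplus F';\Delta\Rightarrow F';\{\pi^{-1}\bullet a\# X\}\cup\Delta$; result $\Delta$ if the terminal state is $\emptyset;\Delta$, $\bot$ if it contains some $a\# a$. $\nabla\sigma:={\sf FC}(\{a\# X\sigma\mid a\# X\in\nabla\})$. $\sigma$ respects $\nabla$ if for each $X$ no $a$ with $a\# X\in\nabla$ occurs free in $X\sigma$ outside suspensions. A term-in-context is $\langle\nabla,t\rangle$; $\langle\nabla_1,t_1\rangle\preceq\langle\nabla_2,t_2\rangle$ iff some $\sigma$ respecting $\nabla_1$ has $\nabla_1\sigma\subseteq\nabla_2$ and $\nabla_2\vdash t_1\sigma\approx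 t_2$. A generalization of $p_1,p_2$ is $p$ with $p\preceq p_1$, $p\preceq p_2$. A term/freshness context is $A$-based if all its atoms lie in $A$; a term-in-context is $A$-based if both components are; an $A$-based generalization is a generalization that is $A$-based. Algorithm $\mathfrak N$ (parameters: finite atom set $A$, $A$-based freshness context $\nabla$). An AUT is $X:t\triangleq s$ ($X$ a generalization variable of the sort of $t,s$). States are $P;S;\Gamma;\sigma$ with $P,S$ sets of AUTs (each generalization variable occurring only once in $P\cup S$), $\Gamma$ a freshness context, $\sigma$ a substitution. Rules: Dec: $\{X:h(t_1,..,t_m)\triangleq h(s_1,..,s_m)\}\uplus P;S;\Gamma;\sigma\Rightarrow\{Y_1:t_1\triangleq s_1,..,Y_m:t_m\triangleq s_m\}\cup P;S;\Gamma;\sigma\{X\mapsto h(Y_1,..,Y_m)\}$, $h$ a function symbol or an atom ($m\ge0$), $Y_i$ fresh. Abs: $\{X:a.t\triangleq b.s\}\uplus P;S;\Gamma;\sigma\Rightarrow\{Y:(c\,a)\bullet t\triangleq(c\,b)\bullet s\}\cup P;S;\Gamma;\sigma\{X\mapsto c.Y\}$, $Y$ fresh, $c\in A$ with $\nabla\vdash c\# a.t$ and $\nabla\vdash c\# b.s$. Sol: $\{X:t\triangleq s\}\uplus P;S;\Gamma;\sigma\Rightarrow P;S\cup\{X:t\triangleq s\};\Gamma\cup\Gamma';\sigma$ where $\Gamma'=\{a\# X\mid a\in A,\nabla\vdash a\# t,\nabla\vdash a\# s\}$, applicable only when Dec and Abs do not apply to this AUT, i.e. (a) $t,s$ have distinct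 heads (head of $f(\dots)$ is $f$, of $a$ is $a$, of an abstraction is the abstraction symbol, of $\pi\cdot X$ is $X$), or (b) both are suspensions, or (c) both are abstractions $a.t',b.s'$ with no $c\in A$ satisfying $\nabla\vdash c\# a.t'$ and $\nabla\vdash c\# b.s'$. Mer: $P;\{X:t_1\triangleq s_1,Y:t_2\triangleq s_2\}\uplus S;\Gamma;\sigma\Rightarrow P;\{X:t_1\triangleq s_1\}\cup S;\Gamma\{Y\mapsto\pi\cdot X\};\sigma\{Y\mapsto\pi\cdot X\}$, where $\pi$ is an $\mathrm{Atoms}(t_1,s_1,t_2,s_2)$-based permutation with $\nabla\vdash\pi\bullet t_1\approx t_2$ and $\nabla\vdash\pi\bullet s_1\approx s_2$. *)

theory Defs
  imports Main
begin

datatype ('as,'ds) srt = AtomS 'as | DataS 'ds | AbsS 'as "('as,'ds) srt"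

record ('a,'as,'ds,'v,'f) nsig =
  atom_sort :: "'a \<Rightarrow> 'as"
  var_sort  :: "'v \<Rightarrow> ('as,'ds) srt"
  fun_sig   :: "'f \<Rightarrow> ('as,'ds) srt list \<times> 'ds"

text \<open>Fn f ts = f(t1..tn); At a = atom; Ab a t = a.t; Su pi X = pi.X.
  A permutation is a list of swappings [(a1,b1),...,(an,bn)] = (a1 b1)...(an bn),
  acting right to left.\<close>
datatype ('a,'v,'f) trm =
    Fn 'f "('a,'v,'f) trm list"
  | At 'a
  | Ab 'a "('a,'v,'f) trm"
  | Su "('a \<times> 'a) list" 'v

definition swap_atom :: "'a \<Rightarrow> 'a \<Rightarrow> 'a \<Rightarrow> 'a" where
  "swap_atom a b c = (if c = a then b else if c = b then a else c)"

fun perm :: "('a \<times> 'a) list \<Rightarrow> 'a \<Rightarrow> 'a" where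
  "perm [] c = c"
| "perm ((a,b) # \<pi>) c = swap_atom a b (perm \<pi> c)"

text \<open>The inverse permutation is the reversed sequence: perm (rev pi).\<close>

definition perm_atoms :: "('a \<times> 'a) list \<Rightarrow> 'a set" where
  "perm_atoms \<pi> = fst ` set \<pi> \<union> snd ` set \<pi>"

definition wf_perm :: "('a,'as,'ds,'v,'f) nsig \<Rightarrow> ('a \<times> 'a) list \<Rightarrow> bool" where
  "wf_perm sig \<pi> = (\<forall>(a,b)\<in>set \<pi>. atom_sort sig a = atom_sort sig b)"

fun act :: "('a \<times> 'a) list \<Rightarrow> ('a,'v,'f) trm \<Rightarrow> ('a,'v,'f) trm" where
  "act \<pi> (Fn f ts) = Fn f (map (act \<pi>) ts)"
| "act \<pi> (At a) = At (perm \<pi> a)"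
| "act \<pi> (Ab a t) = Ab (perm \<pi> a) (act \<pi> t)"
| "act \<pi> (Su \<pi>' X) = Su (\<pi> @ \<pi>') X"

fun atoms :: "('a,'v,'f) trm \<Rightarrow> 'a set" where
  "atoms (Fn f ts) = (\<Union>t\<in>set ts. atoms t)"
| "atoms (At a) = {a}"
| "atoms (Ab a t) = insert a (atoms t)"
| "atoms (Su \<pi> X) = perm_atoms \<pi>"

fun vars :: "('a,'v,'f) trm \<Rightarrow> 'v set" where
  "vars (Fn f ts) = (\<Union>t\<in>set ts. vars t)"
| "vars (At a) = {}"
| "vars (Ab a t) = vars t"
| "vars (Su \<pi> X) = {X}"

fun fa :: "('a,'v,'f) trm \<Rightarrow> 'a set" where
  "fa (Fn f ts) = (\<Union>t\<in>set ts. fa t)"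
| "fa (At a) = {a}"
| "fa (Ab a t) = fa t - {a}"
| "fa (Su \<pi> X) = {}"

inductive has_sort :: "('a,'as,'ds,'v,'f) nsig \<Rightarrow> ('a,'v,'f) trm \<Rightarrow> ('as,'ds) srt \<Rightarrow> bool"
  for sig where
  hs_at: "has_sort sig (At a) (AtomS (atom_sort sig a))"
| hs_ab: "has_sort sig t \<tau> \<Longrightarrow> has_sort sig (Ab a t) (AbsS (atom_sort sig a) \<tau>)"
| hs_fn: "fun_sig sig f = (\<tau>s, d) \<Longrightarrow> list_all2 (has_sort sig) ts \<tau>s
          \<Longrightarrow> has_sort sig (Fn f ts) (DataS d)"
| hs_su: "wf_perm sig \<pi> \<Longrightarrow> has_sort sig (Su \<pi> X) (var_sort sig X)"

type_synonym ('a,'v,'f) subst = "'v \<Rightarrow> ('a,'v,'f) trm"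

fun subst :: "('a,'v,'f) subst \<Rightarrow> ('a,'v,'f) trm \<Rightarrow> ('a,'v,'f) trm" where
  "subst \<sigma> (Fn f ts) = Fn f (map (subst \<sigma>) ts)"
| "subst \<sigma> (At a) = At a"
| "subst \<sigma> (Ab a t) = Ab a (subst \<sigma> t)"
| "subst \<sigma> (Su \<pi> X) = act \<pi> (\<sigma> X)"

definition eps :: "('a,'v,'f) subst" where
  "eps = (\<lambda>X. Su [] X)"

definition comp_subst :: "('a,'v,'f) subst \<Rightarrow> ('a,'v,'f) subst \<Rightarrow> ('a,'v,'f) subst" where
  "comp_subst \<sigma> \<theta> = (\<lambda>X. subst \<theta> (\<sigma> X))"

definition upd1 :: "'v \<Rightarrow> ('a,'v,'f) trm \<Rightarrow> ('a,'v,'f) subst" where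
  "upd1 X t = (\<lambda>Y. if Y = X then t else Su [] Y)"

definition sort_subst :: "('a,'as,'ds,'v,'f) nsig \<Rightarrow> ('a,'v,'f) subst \<Rightarrow> bool" where
  "sort_subst sig \<sigma> = (\<forall>X. has_sort sig (\<sigma> X) (var_sort sig X))"

text \<open>A freshness context: (a, X) stands for a # X.\<close>
type_synonym ('a,'v) fctx = "('a \<times> 'v) set"

fun fresh :: "('a,'v) fctx \<Rightarrow> 'a \<Rightarrow> ('a,'v,'f) trm \<Rightarrow> bool" where
  "fresh N a (Fn f ts) = list_all (fresh N a) ts"
| "fresh N a (At b) = (a \<noteq> b)"
| "fresh N a (Ab b t) = (a = b \<or> fresh N a t)"
| "fresh N a (Su \<pi> X) = ((perm (rev \<pi>) a, X) \<in> N)"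

inductive aeq :: "('a,'v) fctx \<Rightarrow> ('a,'v,'f) trm \<Rightarrow> ('a,'v,'f) trm \<Rightarrow> bool"
  for N where
  aeq_at: "aeq N (At a) (At a)"
| aeq_ab1: "aeq N t t' \<Longrightarrow> aeq N (Ab a t) (Ab a t')"
| aeq_ab2: "a \<noteq> a' \<Longrightarrow> aeq N t (act [(a,a')] t') \<Longrightarrow> fresh N a t'
            \<Longrightarrow> aeq N (Ab a t) (Ab a' t')"
| aeq_su: "(\<forall>a. perm \<pi> a \<noteq> perm \<pi>' a \<longrightarrow> (a, X) \<in> N) \<Longrightarrow> aeq N (Su \<pi> X) (Su \<pi>' X)"
| aeq_fn: "list_all2 (aeq N) ts ss \<Longrightarrow> aeq N (Fn f ts) (Fn f ss)"

text \<open>fc a t computes the normal form of the FC rules started on the single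
  constraint a # t: None stands for bottom (some a # a is reached), Some Delta otherwise.\<close>
fun fc :: "'a \<Rightarrow> ('a,'v,'f) trm \<Rightarrow> ('a,'v) fctx option" where
  "fc a (At b) = (if a = b then None else Some {})"
| "fc a (Ab b t) = (if a = b then Some {} else fc a t)"
| "fc a (Fn f ts) = (if (\<exists>t\<in>set ts. fc a t = None) then None
                     else Some (\<Union>t\<in>set ts. the (fc a t)))"
| "fc a (Su \<pi> X) = Some {(perm (rev \<pi>) a, X)}"

definition FC :: "('a \<times> ('a,'v,'f) trm) set \<Rightarrow> ('a,'v) fctx option" where
  "FC F = (if (\<exists>(a,t)\<in>F. fc a t = None) then None
           else Some (\<Union>(a,t)\<in>F. the (fc a t)))"

definition ctx_subst :: "('a,'v) fctx \<Rightarrow> ('a,'v,'f) subst \<Rightarrow> ('a,'v) fctx option" where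
  "ctx_subst N \<sigma> = FC {(a, subst \<sigma> (Su [] X)) | a X. (a, X) \<in> N}"

definition respects_ctx :: "('a,'v,'f) subst \<Rightarrow> ('a,'v) fctx \<Rightarrow> bool" where
  "respects_ctx \<sigma> N = (\<forall>(a,X)\<in>N. a \<notin> fa (\<sigma> X))"

definition less_general ::
  "('a,'as,'ds,'v,'f) nsig \<Rightarrow> ('a,'v) fctx \<times> ('a,'v,'f) trm
     \<Rightarrow> ('a,'v) fctx \<times> ('a,'v,'f) trm \<Rightarrow> bool" where
  "less_general sig p1 p2 = (case p1 of (N1, t1) \<Rightarrow> case p2 of (N2, t2) \<Rightarrow>
     (\<exists>\<sigma>. sort_subst sig \<sigma> \<and> respects_ctx \<sigma> N1 \<and>
          (\<exists>\<Delta>. ctx_subst N1 \<sigma> = Some \<Delta> \<and> \<Delta> \<subseteq> N2) \<and>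
          aeq N2 (subst \<sigma> t1) t2))"

definition ctx_based :: "'a set \<Rightarrow> ('a,'v) fctx \<Rightarrow> bool" where
  "ctx_based A N = (fst ` N \<subseteq> A)"

definition term_based :: "'a set \<Rightarrow> ('a,'v,'f) trm \<Rightarrow> bool" where
  "term_based A t = (atoms t \<subseteq> A)"

definition A_based_generalization ::
  "('a,'as,'ds,'v,'f) nsig \<Rightarrow> 'a set \<Rightarrow> ('a,'v) fctx \<times> ('a,'v,'f) trm
     \<Rightarrow> ('a,'v) fctx \<times> ('a,'v,'f) trm \<Rightarrow> ('a,'v) fctx \<times> ('a,'v,'f) trm \<Rightarrow> bool" where
  "A_based_generalization sig A p p1 p2 =
     (ctx_based A (fst p) \<and> term_based A (snd p) \<and>
      less_general sig p p1 \<and> less_general sig p p2)"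

text \<open>An AUT X : t = s is the triple (X, t, s). A state is (P, S, Gamma, sigma).\<close>
type_synonym ('a,'v,'f) aut = "'v \<times> ('a,'v,'f) trm \<times> ('a,'v,'f) trm"
type_synonym ('a,'v,'f) state =
  "('a,'v,'f) aut set \<times> ('a,'v,'f) aut set \<times> ('a,'v) fctx \<times> ('a,'v,'f) subst"

definition aut_vars :: "('a,'v,'f) aut set \<Rightarrow> 'v set" where
  "aut_vars P = (\<Union>(X,t,s)\<in>P. insert X (vars t \<union> vars s))"

definition subst_vars :: "('a,'v,'f) subst \<Rightarrow> 'v set" where
  "subst_vars \<sigma> = {X. \<sigma> X \<noteq> Su [] X} \<union> (\<Union>X\<in>{X. \<sigma> X \<noteq> Su [] X}. vars (\<sigma> X))"

text \<open>All variables in use in a state; fresh variables must avoid these and the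
  reserved set V (variables of the input problem and the initial variable).\<close>
definition state_vars :: "('a,'v,'f) state \<Rightarrow> 'v set" where
  "state_vars st = (case st of (P, S, \<Gamma>, \<sigma>) \<Rightarrow>
     aut_vars P \<union> aut_vars S \<union> snd ` \<Gamma> \<union> subst_vars \<sigma>)"

datatype ('a,'v,'f) hsym = HFn 'f | HAt 'a | HAbs | HVar 'v

fun head_of :: "('a,'v,'f) trm \<Rightarrow> ('a,'v,'f) hsym" where
  "head_of (Fn f ts) = HFn f"
| "head_of (At a) = HAt a"
| "head_of (Ab a t) = HAbs"
| "head_of (Su \<pi> X) = HVar X"

fun is_susp :: "('a,'v,'f) trm \<Rightarrow> bool" where
  "is_susp (Su \<pi> X) = True"
| "is_susp _ = False"

definition sol_cond ::
  "('a,'as,'ds,'v,'f) nsig \<Rightarrow> 'a set \<Rightarrow> ('a,'v) fctx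
     \<Rightarrow> ('a,'v,'f) trm \<Rightarrow> ('a,'v,'f) trm \<Rightarrow> bool" where
  "sol_cond sig A N t s =
     (head_of t \<noteq> head_of s \<or> (is_susp t \<and> is_susp s) \<or>
      (\<exists>a t' b s'. t = Ab a t' \<and> s = Ab b s' \<and>
         \<not> (\<exists>c\<in>A. atom_sort sig c = atom_sort sig a \<and> atom_sort sig c = atom_sort sig b \<and>
                   fresh N c t \<and> fresh N c s)))"

inductive N_step ::
  "('a,'as,'ds,'v,'f) nsig \<Rightarrow> 'a set \<Rightarrow> ('a,'v) fctx \<Rightarrow> 'v set
     \<Rightarrow> ('a,'v,'f) state \<Rightarrow> ('a,'v,'f) state \<Rightarrow> bool"
  for sig A N V where
  Dec_fn:
  "(X, Fn f ts, Fn f ss) \<in> P \<Longrightarrow> length ss = length ts \<Longrightarrow> length Ys = length ts \<Longrightarrow>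
   distinct Ys \<Longrightarrow> set Ys \<inter> (V \<union> state_vars (P, S, \<Gamma>, \<sigma>)) = {} \<Longrightarrow>
   (\<forall>i<length ts. has_sort sig (ts ! i) (var_sort sig (Ys ! i))) \<Longrightarrow>
   N_step sig A N V (P, S, \<Gamma>, \<sigma>)
     ((P - {(X, Fn f ts, Fn f ss)}) \<union> {(Ys ! i, ts ! i, ss ! i) | i. i < length ts},
      S, \<Gamma>, comp_subst \<sigma> (upd1 X (Fn f (map (Su []) Ys))))"
| Dec_at:
  "(X, At a, At a) \<in> P \<Longrightarrow>
   N_step sig A N V (P, S, \<Gamma>, \<sigma>)
     (P - {(X, At a, At a)}, S, \<Gamma>, comp_subst \<sigma> (upd1 X (At a)))"
| Abs:
  "(X, Ab a t, Ab b s) \<in> P \<Longrightarrow> Y \<notin> V \<union> state_vars (P, S, \<Gamma>, \<sigma>) \<Longrightarrow>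
   c \<in> A \<Longrightarrow> atom_sort sig c = atom_sort sig a \<Longrightarrow> atom_sort sig c = atom_sort sig b \<Longrightarrow>
   fresh N c (Ab a t) \<Longrightarrow> fresh N c (Ab b s) \<Longrightarrow>
   has_sort sig (act [(c,a)] t) (var_sort sig Y) \<Longrightarrow>
   N_step sig A N V (P, S, \<Gamma>, \<sigma>)
     ((P - {(X, Ab a t, Ab b s)}) \<union> {(Y, act [(c,a)] t, act [(c,b)] s)},
      S, \<Gamma>, comp_subst \<sigma> (upd1 X (Ab c (Su [] Y))))"
| Sol:
  "(X, t, s) \<in> P \<Longrightarrow> sol_cond sig A N t s \<Longrightarrow>
   N_step sig A N V (P, S, \<Gamma>, \<sigma>)
     (P - {(X, t, s)}, S \<union> {(X, t, s)},
      \<Gamma> \<union> {(a, X) | a. a \<in> A \<and> fresh N a t \<and> fresh N a s}, \<sigma>)"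
| Mer:
  "(X, t1, s1) \<in> S \<Longrightarrow> (Y, t2, s2) \<in> S \<Longrightarrow> X \<noteq> Y \<Longrightarrow>
   wf_perm sig \<pi> \<Longrightarrow> perm_atoms \<pi> \<subseteq> atoms t1 \<union> atoms s1 \<union> atoms t2 \<union> atoms s2 \<Longrightarrow>
   aeq N (act \<pi> t1) t2 \<Longrightarrow> aeq N (act \<pi> s1) s2 \<Longrightarrow>
   ctx_subst \<Gamma> (upd1 Y (Su \<pi> X) :: ('a,'v,'f) subst) = Some \<Gamma>' \<Longrightarrow>
   N_step sig A N V (P, S, \<Gamma>, \<sigma>)
     (P, S - {(Y, t2, s2)}, \<Gamma>', comp_subst \<sigma> (upd1 Y (Su \<pi> X)))"

end

theory Submission
  imports Defs
begin

text \<open>Soundness rests on an invariant of the states P; S; Gamma; sigma. Its core says that every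
  substitution rho solving all AUTs of P and S on the left (rho Y is alpha-equivalent to t for each
  Y : t = s) maps X sigma to a term alpha-equivalent to the input t, and likewise on the right.
  Dec, Abs and Mer refine sigma by some Y := u; a solution of the new set of AUTs, extended by
  Y := u rho, solves the old one, so the invariant persists. For Abs this uses the
  characterisation of alpha-equivalent abstractions, for Mer equivariance and transitivity of
  alpha-equivalence. Each constraint a # Y in Gamma is justified by an AUT Y : t = s of the store
  with a # t and a # s: Sol creates such constraints and Mer transports them along the inverse
  of pi. Once P is empty, the substitution sending every store variable to the left (right) term
  of its AUT is a well-sorted solution respecting Gamma, and it witnesses that the result is more
  general than the left (right) input.\<close>

section \<open>Permutations and the swapping action\<close>

lemma swap_atom_simps [simp]:
  "swap_atom a b a = b" "swap_atom a b b = a"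
  "c \<noteq> a \<Longrightarrow> c \<noteq> b \<Longrightarrow> swap_atom a b c = c"
  "swap_atom a b (swap_atom a b c) = c"
  by (auto simp: swap_atom_def)

lemma perm_append [simp]: "perm (\<pi> @ \<pi>') c = perm \<pi> (perm \<pi>' c)"
  by (induction \<pi> arbitrary: c) auto

lemma perm_rev_perm [simp]: "perm (rev \<pi>) (perm \<pi> c) = c"
  by (induction \<pi> arbitrary: c) auto

lemma perm_perm_rev [simp]: "perm \<pi> (perm (rev \<pi>) c) = c"
  using perm_rev_perm [of "rev \<pi>"] by simp

lemma perm_eq_iff [simp]: "perm \<pi> a = perm \<pi> b \<longleftrightarrow> a = b"
  by (metis perm_rev_perm)

lemma perm_atoms_simps [simp]:
  "perm_atoms [] = {}"
  "perm_atoms ((a, b) # \<pi>) = insert a (insert b (perm_atoms \<pi>))"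
  "perm_atoms (\<pi> @ \<pi>') = perm_atoms \<pi> \<union> perm_atoms \<pi>'"
  "perm_atoms (rev \<pi>) = perm_atoms \<pi>"
  by (auto simp: perm_atoms_def)

lemma perm_rev_eq_iff: "perm (rev \<pi>) a = b \<longleftrightarrow> a = perm \<pi> b"
  by (metis perm_perm_rev perm_rev_perm)

lemma perm_in_perm_atoms: "perm \<pi> a = a \<or> perm \<pi> a \<in> perm_atoms \<pi>"
  by (induction \<pi>) (auto simp: swap_atom_def split: if_splits)

lemma perm_closed: "a \<in> B \<Longrightarrow> perm_atoms \<pi> \<subseteq> B \<Longrightarrow> perm \<pi> a \<in> B"
  using perm_in_perm_atoms [of \<pi> a] by auto

lemma wf_perm_append [simp]: "wf_perm sig (\<pi> @ \<pi>') \<longleftrightarrow> wf_perm sig \<pi> \<and> wf_perm sig \<pi>'"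
  by (auto simp: wf_perm_def)

lemma atom_sort_swap_atom:
  "atom_sort sig a = atom_sort sig b \<Longrightarrow> atom_sort sig (swap_atom a b c) = atom_sort sig c"
  by (simp add: swap_atom_def)

lemma atom_sort_perm: "wf_perm sig \<pi> \<Longrightarrow> atom_sort sig (perm \<pi> a) = atom_sort sig a"
  by (induction \<pi>) (auto simp: wf_perm_def atom_sort_swap_atom)

lemma act_Nil [simp]: "act [] u = u"
  by (induction u) (auto simp: map_idI)

lemma act_act [simp]: "act \<pi> (act \<pi>' u) = act (\<pi> @ \<pi>') u"
  by (induction u) auto

lemma fresh_act [simp]: "fresh N a (act \<pi> u) = fresh N (perm (rev \<pi>) a) u"
  by (induction u arbitrary: a) (auto simp: list_all_iff perm_rev_eq_iff)

lemma atoms_act: "atoms (act \<pi> u) \<subseteq> perm_atoms \<pi> \<union> atoms u"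
proof (induction u)
  case (At a)
  then show ?case using perm_in_perm_atoms [of \<pi> a] by auto
next
  case (Ab a t)
  then show ?case using perm_in_perm_atoms [of \<pi> a] by auto
qed auto

lemma has_sort_act: "has_sort sig u \<tau> \<Longrightarrow> wf_perm sig \<pi> \<Longrightarrow> has_sort sig (act \<pi> u) \<tau>"
proof (induction rule: has_sort.induct)
  case (hs_at a)
  then show ?case using has_sort.hs_at [of sig "perm \<pi> a"] by (simp add: atom_sort_perm)
next
  case (hs_ab t \<tau> a)
  then show ?case using has_sort.hs_ab [of sig "act \<pi> t" \<tau> "perm \<pi> a"] by (simp add: atom_sort_perm)
next
  case (hs_fn f \<tau>s d ts)
  then show ?case by (auto intro: has_sort.hs_fn simp: list_all2_conv_all_nth)
next
  case (hs_su \<pi>' X)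
  then show ?case using has_sort.hs_su [of sig "\<pi> @ \<pi>'" X] by simp
qed

section \<open>Alpha-equivalence\<close>

inductive perm_repr_eq :: "('a,'v,'f) trm \<Rightarrow> ('a,'v,'f) trm \<Rightarrow> bool" where
  "perm_repr_eq (At a) (At a)"
| "perm_repr_eq t t' \<Longrightarrow> perm_repr_eq (Ab a t) (Ab a t')"
| "perm \<pi> = perm \<pi>' \<Longrightarrow> perm_repr_eq (Su \<pi> X) (Su \<pi>' X)"
| "list_all2 perm_repr_eq ts ss \<Longrightarrow> perm_repr_eq (Fn f ts) (Fn f ss)"

lemma perm_repr_eq_act_cong: "perm \<pi> = perm \<pi>' \<Longrightarrow> perm_repr_eq (act \<pi> u) (act \<pi>' u)"
  by (induction u) (auto intro!: perm_repr_eq.intros simp: list_all2_conv_all_nth fun_eq_iff)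

lemma perm_repr_eq_act: "perm_repr_eq u v \<Longrightarrow> perm_repr_eq (act \<pi> u) (act \<pi> v)"
  by (induction rule: perm_repr_eq.induct)
    (auto intro!: perm_repr_eq.intros simp: list_all2_conv_all_nth)

lemma fresh_perm_repr_eq: "perm_repr_eq u v \<Longrightarrow> fresh N a u \<Longrightarrow> fresh N a v"
proof (induction rule: perm_repr_eq.induct)
  case (3 \<pi> \<pi>' X)
  then show ?case by (metis fresh.simps(4) perm_rev_eq_iff)
qed (auto simp: list_all2_conv_all_nth list_all_length)

lemma aeq_perm_repr_eq: "aeq N u v \<Longrightarrow> perm_repr_eq v v' \<Longrightarrow> aeq N u v'"
proof (induction arbitrary: v' rule: aeq.induct)
  case (aeq_at a)
  then show ?case by (auto elim: perm_repr_eq.cases intro: aeq.intros)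
next
  case (aeq_ab1 t t' a)
  then show ?case by (auto elim!: perm_repr_eq.cases [of "Ab _ _"] intro: aeq.intros)
next
  case (aeq_ab2 a a' t t')
  then obtain t'' where "v' = Ab a' t''" "perm_repr_eq t' t''"
    by (auto elim: perm_repr_eq.cases)
  with aeq_ab2 show ?case
    by (simp add: aeq.aeq_ab2 perm_repr_eq_act fresh_perm_repr_eq)
next
  case (aeq_su \<pi> \<pi>' X)
  then show ?case by (auto elim!: perm_repr_eq.cases [of "Su _ _"] intro!: aeq.intros)
next
  case (aeq_fn ts ss f)
  then obtain ss' where "v' = Fn f ss'" "list_all2 perm_repr_eq ss ss'"
    by (auto elim: perm_repr_eq.cases)
  with aeq_fn show ?case
    by (auto intro!: aeq.aeq_fn simp: list_all2_conv_all_nth)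
qed

lemma aeq_act_perm_cong: "aeq N u (act \<pi> v) \<Longrightarrow> perm \<pi> = perm \<pi>' \<Longrightarrow> aeq N u (act \<pi>' v)"
  using aeq_perm_repr_eq perm_repr_eq_act_cong by blast

lemma perm_swap_self: "perm [(a, a)] = perm []"
  by (simp add: fun_eq_iff swap_atom_def)

lemma aeq_refl: "aeq N u u"
  by (induction u) (auto intro!: aeq.intros simp: list_all2_conv_all_nth)

lemma aeq_Ab_iff: "aeq N (Ab a u) (Ab b v) \<longleftrightarrow> aeq N u (act [(a, b)] v) \<and> fresh N a (Ab b v)"
proof
  assume "aeq N (Ab a u) (Ab b v)"
  then show "aeq N u (act [(a, b)] v) \<and> fresh N a (Ab b v)"
  proof (cases rule: aeq.cases)
    case aeq_ab1
    then have "aeq N u (act [(a, a)] v)"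
      using aeq_act_perm_cong [of N u "[]" v "[(a, a)]"] perm_swap_self by (metis act_Nil)
    with aeq_ab1 show ?thesis by simp
  qed simp_all
next
  assume *: "aeq N u (act [(a, b)] v) \<and> fresh N a (Ab b v)"
  show "aeq N (Ab a u) (Ab b v)"
  proof (cases "a = b")
    case True
    with * have "aeq N u (act [] v)"
      using aeq_act_perm_cong [of N u "[(a, a)]" v "[]"] perm_swap_self by metis
    with True show ?thesis by (simp add: aeq.aeq_ab1)
  next
    case False
    with * show ?thesis by (simp add: aeq.aeq_ab2)
  qed
qed

lemma fresh_aeq_iff: "aeq N u v \<Longrightarrow> fresh N a u \<longleftrightarrow> fresh N a v"
proof (induction arbitrary: a rule: aeq.induct)
  case (aeq_ab2 b b' t t')
  have "fresh N a t \<longleftrightarrow> fresh N (swap_atom b b' a) t'"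
    using aeq_ab2.IH by simp
  with aeq_ab2.hyps show ?case by (cases "a = b"; cases "a = b'") simp_all
next
  case (aeq_su \<pi> \<pi>' X)
  then show ?case by (metis fresh.simps(4) perm_perm_rev)
next
  case (aeq_fn ts ss f)
  then show ?case by (auto simp: list_all2_conv_all_nth list_all_length)
qed simp_all

lemma perm_append_swap: "perm (\<pi> @ [(a, b)]) = perm ((perm \<pi> a, perm \<pi> b) # \<pi>)"
  by (simp add: fun_eq_iff swap_atom_def)

lemma aeq_act: "aeq N u v \<Longrightarrow> aeq N (act \<pi> u) (act \<pi> v)"
proof (induction rule: aeq.induct)
  case (aeq_ab2 a a' t t')
  then have "aeq N (act \<pi> t) (act ((perm \<pi> a, perm \<pi> a') # \<pi>) t')"
    by (auto intro: aeq_act_perm_cong simp: perm_append_swap)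
  with aeq_ab2 show ?case by (simp add: aeq_Ab_iff)
next
  case (aeq_fn ts ss f)
  then show ?case by (auto intro!: aeq.aeq_fn simp: list_all2_conv_all_nth)
qed (auto intro: aeq.intros)

lemma aeq_disagreement:
  "(\<forall>c. perm \<pi> c \<noteq> perm \<pi>' c \<longrightarrow> fresh N c u) \<Longrightarrow> aeq N (act \<pi> u) (act \<pi>' u)"
proof (induction u arbitrary: \<pi> \<pi>')
  case (Fn f ts)
  then show ?case by (auto intro!: aeq.aeq_fn simp: list_all2_conv_all_nth list_all_length)
next
  case (At a)
  then have "perm \<pi> a = perm \<pi>' a" by auto
  then show ?case by (simp add: aeq.aeq_at)
next
  case (Su \<rho> X)
  then show ?case by (auto intro!: aeq.aeq_su)
next
  case (Ab b u)
  \<comment> \<open>Compare with the permutation \<open>(\<pi> b  \<pi>' b) \<circ> \<pi>'\<close>, which agrees with \<open>\<pi>\<close> on the binder \<open>b\<close>.\<close>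
  let ?\<pi>'' = "(perm \<pi> b, perm \<pi>' b) # \<pi>'"
  have "fresh N d u" if "perm \<pi> d \<noteq> perm ?\<pi>'' d" for d
  proof -
    have "d \<noteq> b" using that by auto
    moreover have "perm \<pi> d \<noteq> perm \<pi>' d"
    proof
      assume eq: "perm \<pi> d = perm \<pi>' d"
      then have "perm \<pi>' d \<noteq> perm \<pi> b" "perm \<pi>' d \<noteq> perm \<pi>' b" using \<open>d \<noteq> b\<close> by auto
      with eq that show False by simp
    qed
    ultimately show ?thesis using Ab.prems by auto
  qed
  then have "aeq N (act \<pi> u) (act [(perm \<pi> b, perm \<pi>' b)] (act \<pi>' u))"
    using Ab.IH by simp
  moreover have "fresh N (perm \<pi> b) (Ab (perm \<pi>' b) (act \<pi>' u))"
  proof (cases "perm \<pi> b = perm \<pi>' b")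
    case False
    let ?e = "perm (rev \<pi>') (perm \<pi> b)"
    have "?e \<noteq> b" "perm \<pi> ?e \<noteq> perm \<pi>' ?e" using False by (auto simp: perm_rev_eq_iff)
    with Ab.prems have "fresh N ?e (Ab b u)" by blast
    with \<open>?e \<noteq> b\<close> show ?thesis by simp
  qed simp
  ultimately show ?case by (simp add: aeq_Ab_iff)
qed

lemma aeq_trans: "aeq N t1 t2 \<Longrightarrow> aeq N t2 t3 \<Longrightarrow> aeq N t1 t3"
proof (induction t1 arbitrary: t2 t3)
  case (At a)
  then show ?case by (auto elim: aeq.cases)
next
  case (Su \<pi> X)
  from Su.prems show ?case
    by (auto elim!: aeq.cases [of N "Su _ _"] intro!: aeq.aeq_su) metis
next
  case (Fn f ts)
  from Fn.prems obtain ss rs where "t2 = Fn f ss" "list_all2 (aeq N) ts ss"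
    "t3 = Fn f rs" "list_all2 (aeq N) ss rs"
    by (auto elim!: aeq.cases [of N "Fn _ _"])
  with Fn.IH show ?case
    by (auto intro!: aeq.aeq_fn simp: list_all2_conv_all_nth) (metis nth_mem)
next
  case (Ab a u)
  from Ab.prems obtain b v c w where t23: "t2 = Ab b v" "t3 = Ab c w"
    by (auto elim!: aeq.cases [of N "Ab _ _"])
  from Ab.prems have uv: "aeq N u (act [(a, b)] v)" and "fresh N a (Ab b v)"
    and vw: "aeq N v (act [(b, c)] w)" and bw: "fresh N b (Ab c w)"
    by (simp_all add: t23 aeq_Ab_iff)
  then have aw: "fresh N a (Ab c w)"
    using fresh_aeq_iff [OF Ab.prems(2) [unfolded t23]] by simp
  have "aeq N u (act [(a, b), (b, c)] w)"
    using Ab.IH [OF uv aeq_act [OF vw, of "[(a, b)]"]] by simp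
  \<comment> \<open>\<open>(a b)(b c)\<close> and \<open>(a c)\<close> can only disagree on \<open>a\<close> and \<open>b\<close>, for which \<open>w\<close> is fresh.\<close>
  moreover have "aeq N (act [(a, b), (b, c)] w) (act [(a, c)] w)"
    using aw bw by (intro aeq_disagreement) (auto simp: swap_atom_def)
  ultimately have "aeq N u (act [(a, c)] w)" by (rule Ab.IH)
  with aw show ?case by (simp add: t23 aeq_Ab_iff)
qed

section \<open>Substitutions, sorts and freshness contexts\<close>

lemma subst_act [simp]: "subst \<rho> (act \<pi> u) = act \<pi> (subst \<rho> u)"
  by (induction u) auto

lemma subst_subst_upd1: "subst \<rho> (subst (upd1 X u) w) = subst (\<rho>(X := subst \<rho> u)) w"
  by (induction w) (auto simp: upd1_def)

lemma atoms_subst_upd1: "atoms (subst (upd1 X u) w) \<subseteq> atoms w \<union> atoms u"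
proof (induction w)
  case (Su \<pi> Y)
  then show ?case using atoms_act [of \<pi> "upd1 X u Y"] by (auto simp: upd1_def)
qed auto

inductive_cases has_sort_AbE: "has_sort sig (Ab a t) \<tau>"
inductive_cases has_sort_FnE: "has_sort sig (Fn f ts) \<tau>"

lemma has_sort_unique: "has_sort sig u \<tau>1 \<Longrightarrow> has_sort sig u \<tau>2 \<Longrightarrow> \<tau>1 = \<tau>2"
proof (induction arbitrary: \<tau>2 rule: has_sort.induct)
  case (hs_ab t \<tau> a)
  from hs_ab.prems show ?case by (elim has_sort_AbE) (simp add: hs_ab.IH)
next
  case (hs_fn f \<tau>s d ts)
  from hs_fn.prems show ?case by (elim has_sort_FnE) (use hs_fn.hyps(1) in simp)
qed (auto elim: has_sort.cases)

lemma fresh_imp_notin_fa: "fresh N a u \<Longrightarrow> a \<notin> fa u"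
  by (induction u) (auto simp: list_all_iff)

lemma fc_fresh: "fresh N a u \<Longrightarrow> \<exists>\<Delta>. fc a u = Some \<Delta> \<and> \<Delta> \<subseteq> N"
proof (induction u)
  case (Fn f ts)
  then have "\<And>t. t \<in> set ts \<Longrightarrow> \<exists>\<Delta>. fc a t = Some \<Delta> \<and> \<Delta> \<subseteq> N"
    by (auto simp: list_all_iff)
  then show ?case by fastforce
qed auto

lemma ctx_subst_fresh:
  assumes "\<forall>(a, Z)\<in>\<Gamma>. fresh N a (\<rho> Z)"
  shows "\<exists>\<Delta>. ctx_subst \<Gamma> \<rho> = Some \<Delta> \<and> \<Delta> \<subseteq> N"
proof -
  have fc: "\<exists>\<Delta>. fc a u = Some \<Delta> \<and> \<Delta> \<subseteq> N"
    if "(a, u) \<in> {(a, subst \<rho> (Su [] Z)) | a Z. (a, Z) \<in> \<Gamma>}" for a u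
    using that assms by (auto intro: fc_fresh)
  then show ?thesis unfolding ctx_subst_def FC_def by fastforce
qed

lemma respects_ctx_fresh: "\<forall>(a, Z)\<in>\<Gamma>. fresh N a (\<rho> Z) \<Longrightarrow> respects_ctx \<rho> \<Gamma>"
  by (auto simp: respects_ctx_def dest: fresh_imp_notin_fa)

lemma ctx_subst_upd1_Su:
  "ctx_subst \<Gamma> (upd1 Y (Su \<pi> X)) =
     Some ({(a, Z). (a, Z) \<in> \<Gamma> \<and> Z \<noteq> Y} \<union> {(perm (rev \<pi>) a, X) | a. (a, Y) \<in> \<Gamma>})"
proof -
  have F: "{(a, subst (upd1 Y (Su \<pi> X)) (Su [] Z)) | a Z. (a, Z) \<in> \<Gamma>} =
      (\<lambda>(a, Z). (a, upd1 Y (Su \<pi> X) Z)) ` \<Gamma>"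
    by auto
  have fc: "fc a (upd1 Y (Su \<pi> X) Z) = Some {if Z = Y then (perm (rev \<pi>) a, X) else (a, Z)}"
    for a Z
    by (simp add: upd1_def)
  show ?thesis
    unfolding ctx_subst_def FC_def F by (auto simp: fc split: if_splits)
qed

section \<open>The invariant of algorithm N\<close>

text \<open>\<open>side\<close> is \<open>fst\<close> or \<open>snd\<close> and selects the left or the right term of each AUT.\<close>

definition aut_solution ::
  "('a,'v) fctx \<Rightarrow> (('a,'v,'f) trm \<times> ('a,'v,'f) trm \<Rightarrow> ('a,'v,'f) trm) \<Rightarrow> ('a,'v,'f) aut set
     \<Rightarrow> ('a,'v,'f) subst \<Rightarrow> bool" where
  "aut_solution N side L \<rho> \<longleftrightarrow> (\<forall>Y t s. (Y, t, s) \<in> L \<longrightarrow> aeq N (\<rho> Y) (side (t, s)))"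

definition solutions_instantiate ::
  "('a,'v) fctx \<Rightarrow> (('a,'v,'f) trm \<times> ('a,'v,'f) trm \<Rightarrow> ('a,'v,'f) trm) \<Rightarrow> ('a,'v,'f) aut set
     \<Rightarrow> ('a,'v,'f) trm \<Rightarrow> ('a,'v,'f) trm \<Rightarrow> bool" where
  "solutions_instantiate N side L w r \<longleftrightarrow> (\<forall>\<rho>. aut_solution N side L \<rho> \<longrightarrow> aeq N (subst \<rho> w) r)"

definition auts_wf :: "('a,'as,'ds,'v,'f) nsig \<Rightarrow> 'a set \<Rightarrow> ('a,'v,'f) aut set \<Rightarrow> bool" where
  "auts_wf sig A L \<longleftrightarrow> (\<forall>Y t s. (Y, t, s) \<in> L \<longrightarrow>
     has_sort sig t (var_sort sig Y) \<and> has_sort sig s (var_sort sig Y) \<and> atoms t \<subseteq> A \<and> atoms s \<subseteq> A)"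

definition ctx_justified :: "'a set \<Rightarrow> ('a,'v) fctx \<Rightarrow> ('a,'v,'f) aut set \<Rightarrow> ('a,'v) fctx \<Rightarrow> bool" where
  "ctx_justified A N S \<Gamma> \<longleftrightarrow> (\<forall>a Y. (a, Y) \<in> \<Gamma> \<longrightarrow> a \<in> A \<and> (\<exists>t s. (Y, t, s) \<in> S \<and> fresh N a t \<and> fresh N a s))"

definition N_invariant :: "('a,'as,'ds,'v,'f) nsig \<Rightarrow> 'a set \<Rightarrow> ('a,'v) fctx \<Rightarrow> 'v
    \<Rightarrow> ('a,'v,'f) trm \<Rightarrow> ('a,'v,'f) trm \<Rightarrow> ('a,'v,'f) state \<Rightarrow> bool" where
  "N_invariant sig A N X0 t0 s0 st \<longleftrightarrow> (case st of (P, S, \<Gamma>, \<sigma>) \<Rightarrow>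
     inj_on fst (P \<union> S) \<and> auts_wf sig A (P \<union> S) \<and> ctx_justified A N S \<Gamma> \<and>
     atoms (\<sigma> X0) \<subseteq> A \<and>
     solutions_instantiate N fst (P \<union> S) (\<sigma> X0) t0 \<and> solutions_instantiate N snd (P \<union> S) (\<sigma> X0) s0)"

lemma aut_solution_mono: "aut_solution N side L \<rho> \<Longrightarrow> L' \<subseteq> L \<Longrightarrow> aut_solution N side L' \<rho>"
  by (auto simp: aut_solution_def)

lemma auts_wf_mono: "auts_wf sig A L \<Longrightarrow> L' \<subseteq> L \<Longrightarrow> auts_wf sig A L'"
  unfolding auts_wf_def by blast

lemma auts_wf_Un: "auts_wf sig A (L \<union> L') \<longleftrightarrow> auts_wf sig A L \<and> auts_wf sig A L'"
  unfolding auts_wf_def by blast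

lemma auts_wfD:
  "auts_wf sig A L \<Longrightarrow> (Y, t, s) \<in> L \<Longrightarrow>
     has_sort sig t (var_sort sig Y) \<and> has_sort sig s (var_sort sig Y) \<and> atoms t \<subseteq> A \<and> atoms s \<subseteq> A"
  by (auto simp: auts_wf_def)

lemma solutions_instantiate_upd1:
  assumes inst: "solutions_instantiate N side L w r" and inj: "inj_on fst L"
    and x: "(X, t, s) \<in> L" and L': "L - {(X, t, s)} \<subseteq> L'"
    and u: "\<And>\<rho>. aut_solution N side L' \<rho> \<Longrightarrow> aeq N (subst \<rho> u) (side (t, s))"
  shows "solutions_instantiate N side L' (subst (upd1 X u) w) r"
  unfolding solutions_instantiate_def
proof (intro allI impI)
  fix \<rho> assume sol: "aut_solution N side L' \<rho>"
  have "aut_solution N side L (\<rho>(X := subst \<rho> u))"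
    unfolding aut_solution_def
  proof (intro allI impI)
    fix Y t' s' assume y: "(Y, t', s') \<in> L"
    show "aeq N ((\<rho>(X := subst \<rho> u)) Y) (side (t', s'))"
    proof (cases "Y = X")
      case True
      with inj_onD [OF inj _ y x] have "(t', s') = (t, s)" by simp
      with True u [OF sol] show ?thesis by simp
    next
      case False
      with y L' sol show ?thesis by (auto simp: aut_solution_def)
    qed
  qed
  with inst show "aeq N (subst \<rho> (subst (upd1 X u) w)) r"
    by (simp add: solutions_instantiate_def subst_subst_upd1)
qed

lemma N_invariant_decompose:
  assumes inv: "N_invariant sig A N X0 t0 s0 (P, S, \<Gamma>, \<sigma>)" and x: "(X, t, s) \<in> P"
    and new_labels: "fst ` New \<inter> fst ` (P \<union> S) = {}" "inj_on fst New"
    and wf: "auts_wf sig A New" and atoms_u: "atoms u \<subseteq> A"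
    and lhs: "\<And>\<rho>. aut_solution N fst New \<rho> \<Longrightarrow> aeq N (subst \<rho> u) t"
    and rhs: "\<And>\<rho>. aut_solution N snd New \<rho> \<Longrightarrow> aeq N (subst \<rho> u) s"
  shows "N_invariant sig A N X0 t0 s0 (P - {(X, t, s)} \<union> New, S, \<Gamma>, comp_subst \<sigma> (upd1 X u))"
proof -
  let ?L' = "P - {(X, t, s)} \<union> New \<union> S"
  have sub: "?L' \<subseteq> (P \<union> S) \<union> New" and del: "(P \<union> S) - {(X, t, s)} \<subseteq> ?L'"
    and new: "New \<subseteq> ?L'" and xL: "(X, t, s) \<in> P \<union> S"
    using x by auto
  from inv have inj: "inj_on fst (P \<union> S)"
    by (simp add: N_invariant_def)
  with new_labels have "inj_on fst ((P \<union> S) \<union> New)"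
    by (auto simp: inj_on_Un)
  then have "inj_on fst ?L'"
    using sub by (rule inj_on_subset)
  moreover from inv wf have "auts_wf sig A ?L'"
    by (intro auts_wf_mono [OF _ sub]) (simp add: N_invariant_def auts_wf_Un)
  moreover from inv atoms_u have "atoms (subst (upd1 X u) (\<sigma> X0)) \<subseteq> A"
    using atoms_subst_upd1 [of X u "\<sigma> X0"] by (auto simp: N_invariant_def)
  moreover from inv have "solutions_instantiate N fst ?L' (subst (upd1 X u) (\<sigma> X0)) t0"
    by (intro solutions_instantiate_upd1 [OF _ inj xL del])
      (auto simp: N_invariant_def intro: lhs aut_solution_mono [OF _ new])
  moreover from inv have "solutions_instantiate N snd ?L' (subst (upd1 X u) (\<sigma> X0)) s0"
    by (intro solutions_instantiate_upd1 [OF _ inj xL del])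
      (auto simp: N_invariant_def intro: rhs aut_solution_mono [OF _ new])
  ultimately show ?thesis
    using inv by (simp add: N_invariant_def comp_subst_def Un_assoc)
qed

lemma labels_subset_state_vars: "fst ` (P \<union> S) \<subseteq> state_vars (P, S, \<Gamma>, \<sigma>)"
  by (force simp: state_vars_def aut_vars_def)

lemma N_invariant_pending_wf:
  assumes "N_invariant sig A N X0 t0 s0 (P, S, \<Gamma>, \<sigma>)" and "(Y, t, s) \<in> P"
  shows "has_sort sig t (var_sort sig Y)" "has_sort sig s (var_sort sig Y)"
    and "atoms t \<subseteq> A" "atoms s \<subseteq> A"
  using assms auts_wfD [of sig A "P \<union> S" Y t s] by (simp_all add: N_invariant_def)

lemma N_invariant_Dec_at:
  assumes inv: "N_invariant sig A N X0 t0 s0 (P, S, \<Gamma>, \<sigma>)" and x: "(X, At a, At a) \<in> P"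
  shows "N_invariant sig A N X0 t0 s0 (P - {(X, At a, At a)}, S, \<Gamma>, comp_subst \<sigma> (upd1 X (At a)))"
proof -
  from N_invariant_pending_wf(3) [OF inv x] have "a \<in> A"
    by simp
  then show ?thesis
    using N_invariant_decompose [OF inv x, of "{}" "At a"]
    by (simp add: aut_solution_def auts_wf_def aeq.aeq_at)
qed

lemma aeq_subst_Fn_vars:
  "length Ys = length us \<Longrightarrow> (\<And>i. i < length us \<Longrightarrow> aeq N (\<rho> (Ys ! i)) (us ! i)) \<Longrightarrow>
    aeq N (subst \<rho> (Fn f (map (Su []) Ys))) (Fn f us)"
  by (auto intro!: aeq.aeq_fn simp: list_all2_conv_all_nth)

lemma auts_wf_Fn_args:
  assumes "has_sort sig (Fn f ts) \<tau>" "has_sort sig (Fn f ss) \<tau>"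
    and "atoms (Fn f ts) \<subseteq> A" "atoms (Fn f ss) \<subseteq> A"
    and Ys_sorts: "\<forall>i<length ts. has_sort sig (ts ! i) (var_sort sig (Ys ! i))"
  shows "auts_wf sig A {(Ys ! i, ts ! i, ss ! i) | i. i < length ts}"
  unfolding auts_wf_def
proof (intro allI impI)
  from assms(1,2) obtain \<tau>s where ts: "list_all2 (has_sort sig) ts \<tau>s"
    and ss: "list_all2 (has_sort sig) ss \<tau>s"
    by (elim has_sort_FnE) auto
  fix Y t s assume "(Y, t, s) \<in> {(Ys ! i, ts ! i, ss ! i) | i. i < length ts}"
  then obtain i where i: "i < length ts" and eq: "Y = Ys ! i" "t = ts ! i" "s = ss ! i"
    by blast
  from ts ss i have "has_sort sig (ts ! i) (\<tau>s ! i)" "has_sort sig (ss ! i) (\<tau>s ! i)"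
    and "i < length ss"
    by (auto simp: list_all2_conv_all_nth)
  moreover have "var_sort sig (Ys ! i) = \<tau>s ! i"
    using has_sort_unique [OF Ys_sorts [rule_format, OF i] calculation(1)] .
  moreover have "atoms (ts ! i) \<subseteq> A" "atoms (ss ! i) \<subseteq> A"
    using assms(3,4) nth_mem [OF i] nth_mem [OF \<open>i < length ss\<close>] by (simp_all add: UN_subset_iff)
  ultimately show "has_sort sig t (var_sort sig Y) \<and> has_sort sig s (var_sort sig Y) \<and>
      atoms t \<subseteq> A \<and> atoms s \<subseteq> A"
    by (simp add: eq)
qed

lemma N_invariant_Dec_fn:
  assumes inv: "N_invariant sig A N X0 t0 s0 (P, S, \<Gamma>, \<sigma>)" and x: "(X, Fn f ts, Fn f ss) \<in> P"
    and len: "length ss = length ts" "length Ys = length ts" and "distinct Ys"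
    and Ys_fresh: "set Ys \<inter> (V \<union> state_vars (P, S, \<Gamma>, \<sigma>)) = {}"
    and Ys_sorts: "\<forall>i<length ts. has_sort sig (ts ! i) (var_sort sig (Ys ! i))"
  shows "N_invariant sig A N X0 t0 s0
     (P - {(X, Fn f ts, Fn f ss)} \<union> {(Ys ! i, ts ! i, ss ! i) | i. i < length ts},
      S, \<Gamma>, comp_subst \<sigma> (upd1 X (Fn f (map (Su []) Ys))))"
proof -
  define New where "New = {(Ys ! i, ts ! i, ss ! i) | i. i < length ts}"
  have "fst ` New = set Ys"
    using len by (force simp: New_def in_set_conv_nth)
  with Ys_fresh labels_subset_state_vars [of P S \<Gamma> \<sigma>]
  have "fst ` New \<inter> fst ` (P \<union> S) = {}"
    by blast
  moreover have "inj_on fst New"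
    using \<open>distinct Ys\<close> len by (auto simp: New_def inj_on_def nth_eq_iff_index_eq)
  moreover have "auts_wf sig A New"
    unfolding New_def using N_invariant_pending_wf [OF inv x] Ys_sorts by (rule auts_wf_Fn_args)
  moreover have "aeq N (subst \<rho> (Fn f (map (Su []) Ys))) (Fn f ts)"
    if "aut_solution N fst New \<rho>" for \<rho>
    using that len by (intro aeq_subst_Fn_vars) (auto simp: aut_solution_def New_def)
  moreover have "aeq N (subst \<rho> (Fn f (map (Su []) Ys))) (Fn f ss)"
    if "aut_solution N snd New \<rho>" for \<rho>
    using that len by (intro aeq_subst_Fn_vars) (auto simp: aut_solution_def New_def)
  ultimately show ?thesis
    unfolding New_def [symmetric] by (intro N_invariant_decompose [OF inv x]) (auto simp: perm_atoms_def)
qed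

lemma N_invariant_Abs:
  assumes inv: "N_invariant sig A N X0 t0 s0 (P, S, \<Gamma>, \<sigma>)" and x: "(X, Ab a t, Ab b s) \<in> P"
    and Y_fresh: "Y \<notin> V \<union> state_vars (P, S, \<Gamma>, \<sigma>)"
    and c: "c \<in> A" "atom_sort sig c = atom_sort sig a" "atom_sort sig c = atom_sort sig b"
      "fresh N c (Ab a t)" "fresh N c (Ab b s)"
    and Y_sort: "has_sort sig (act [(c, a)] t) (var_sort sig Y)"
  shows "N_invariant sig A N X0 t0 s0 (P - {(X, Ab a t, Ab b s)} \<union> {(Y, act [(c, a)] t, act [(c, b)] s)},
           S, \<Gamma>, comp_subst \<sigma> (upd1 X (Ab c (Su [] Y))))"
proof -
  note wf = N_invariant_pending_wf [OF inv x]
  then obtain \<tau> where "has_sort sig t \<tau>" "has_sort sig s \<tau>"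
    by (elim has_sort_AbE) auto
  with c have sorts: "has_sort sig (act [(c, a)] t) \<tau>" "has_sort sig (act [(c, b)] s) \<tau>"
    by (auto intro: has_sort_act simp: wf_perm_def)
  moreover from sorts(1) Y_sort have "var_sort sig Y = \<tau>"
    by (rule has_sort_unique [symmetric])
  moreover from wf(3,4) c(1) have "atoms (act [(c, a)] t) \<subseteq> A" "atoms (act [(c, b)] s) \<subseteq> A"
    using atoms_act [of "[(c, a)]" t] atoms_act [of "[(c, b)]" s] by auto
  ultimately have "auts_wf sig A {(Y, act [(c, a)] t, act [(c, b)] s)}"
    by (simp add: auts_wf_def)
  moreover from Y_fresh labels_subset_state_vars [of P S \<Gamma> \<sigma>] have "Y \<notin> fst ` (P \<union> S)"
    by blast
  ultimately show ?thesis
    using c(1,4,5) by (intro N_invariant_decompose [OF inv x]) (auto simp: aut_solution_def aeq_Ab_iff)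
qed

lemma N_invariant_Sol:
  assumes inv: "N_invariant sig A N X0 t0 s0 (P, S, \<Gamma>, \<sigma>)" and x: "(X, t, s) \<in> P"
  shows "N_invariant sig A N X0 t0 s0 (P - {(X, t, s)}, S \<union> {(X, t, s)},
           \<Gamma> \<union> {(a, X) | a. a \<in> A \<and> fresh N a t \<and> fresh N a s}, \<sigma>)"
proof -
  from x have "P - {(X, t, s)} \<union> (S \<union> {(X, t, s)}) = P \<union> S"
    by blast
  with inv show ?thesis
    by (simp add: N_invariant_def ctx_justified_def) blast
qed

lemma ctx_justified_Mer:
  assumes ctx: "ctx_justified A N S \<Gamma>" and inj: "inj_on fst S"
    and x: "(X, t1, s1) \<in> S" and y: "(Y, t2, s2) \<in> S" and "X \<noteq> Y"
    and \<pi>_A: "perm_atoms \<pi> \<subseteq> A" and t12: "aeq N (act \<pi> t1) t2" and s12: "aeq N (act \<pi> s1) s2"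
    and \<Gamma>': "ctx_subst \<Gamma> (upd1 Y (Su \<pi> X)) = Some \<Gamma>'"
  shows "ctx_justified A N (S - {(Y, t2, s2)}) \<Gamma>'"
  unfolding ctx_justified_def
proof (intro allI impI)
  fix a Z assume "(a, Z) \<in> \<Gamma>'"
  moreover have "\<Gamma>' = {(a, Z). (a, Z) \<in> \<Gamma> \<and> Z \<noteq> Y} \<union> {(perm (rev \<pi>) a, X) | a. (a, Y) \<in> \<Gamma>}"
    using \<Gamma>' by (simp add: ctx_subst_upd1_Su)
  ultimately consider "(a, Z) \<in> \<Gamma>" "Z \<noteq> Y" | b where "(b, Y) \<in> \<Gamma>" "a = perm (rev \<pi>) b" "Z = X"
    by blast
  then show "a \<in> A \<and> (\<exists>t s. (Z, t, s) \<in> S - {(Y, t2, s2)} \<and> fresh N a t \<and> fresh N a s)"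
  proof cases
    case 1
    with ctx show ?thesis by (auto simp: ctx_justified_def)
  next
    case (2 b)
    with ctx obtain t s where "b \<in> A" "(Y, t, s) \<in> S" "fresh N b t" "fresh N b s"
      unfolding ctx_justified_def by blast
    moreover from this inj_onD [OF inj, of "(Y, t, s)" "(Y, t2, s2)"] y have "t = t2" "s = s2"
      by auto
    ultimately have "fresh N a t1" "fresh N a s1" "a \<in> A"
      using fresh_aeq_iff [OF t12, of b] fresh_aeq_iff [OF s12, of b] perm_closed [of b A "rev \<pi>"]
        \<pi>_A 2 by auto
    with 2 x \<open>X \<noteq> Y\<close> show ?thesis by auto
  qed
qed

lemma N_invariant_Mer:
  assumes inv: "N_invariant sig A N X0 t0 s0 (P, S, \<Gamma>, \<sigma>)"
    and x: "(X, t1, s1) \<in> S" and y: "(Y, t2, s2) \<in> S" and "X \<noteq> Y"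
    and \<pi>_atoms: "perm_atoms \<pi> \<subseteq> atoms t1 \<union> atoms s1 \<union> atoms t2 \<union> atoms s2"
    and t12: "aeq N (act \<pi> t1) t2" and s12: "aeq N (act \<pi> s1) s2"
    and \<Gamma>': "ctx_subst \<Gamma> (upd1 Y (Su \<pi> X)) = Some \<Gamma>'"
  shows "N_invariant sig A N X0 t0 s0 (P, S - {(Y, t2, s2)}, \<Gamma>', comp_subst \<sigma> (upd1 Y (Su \<pi> X)))"
proof -
  let ?L' = "P \<union> (S - {(Y, t2, s2)})"
  from inv have inj: "inj_on fst (P \<union> S)" and wf: "auts_wf sig A (P \<union> S)"
    and ctx: "ctx_justified A N S \<Gamma>"
    by (simp_all add: N_invariant_def)
  have sub: "?L' \<subseteq> P \<union> S" and del: "(P \<union> S) - {(Y, t2, s2)} \<subseteq> ?L'"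
    and yL: "(Y, t2, s2) \<in> P \<union> S" and xL': "(X, t1, s1) \<in> ?L'"
    using x y \<open>X \<noteq> Y\<close> by auto
  from \<pi>_atoms x y wf have \<pi>_A: "perm_atoms \<pi> \<subseteq> A"
    using auts_wfD [OF wf, of X t1 s1] auts_wfD [OF wf, of Y t2 s2] by auto
  have inj_S: "inj_on fst S"
    using inj by (rule inj_on_subset) blast
  from ctx inj_S x y \<open>X \<noteq> Y\<close> \<pi>_A t12 s12 \<Gamma>' have "ctx_justified A N (S - {(Y, t2, s2)}) \<Gamma>'"
    by (rule ctx_justified_Mer)
  moreover from inv \<pi>_A have "atoms (subst (upd1 Y (Su \<pi> X)) (\<sigma> X0)) \<subseteq> A"
    using atoms_subst_upd1 [of Y "Su \<pi> X" "\<sigma> X0"] by (auto simp: N_invariant_def)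
  moreover from inv have "solutions_instantiate N fst ?L' (subst (upd1 Y (Su \<pi> X)) (\<sigma> X0)) t0"
    using xL' aeq_trans [OF aeq_act t12]
    by (intro solutions_instantiate_upd1 [OF _ inj yL del]) (auto simp: N_invariant_def aut_solution_def)
  moreover from inv have "solutions_instantiate N snd ?L' (subst (upd1 Y (Su \<pi> X)) (\<sigma> X0)) s0"
    using xL' aeq_trans [OF aeq_act s12]
    by (intro solutions_instantiate_upd1 [OF _ inj yL del]) (auto simp: N_invariant_def aut_solution_def)
  ultimately show ?thesis
    using inj_on_subset [OF inj sub] auts_wf_mono [OF wf sub] by (simp add: N_invariant_def comp_subst_def)
qed

lemma N_invariant_step:
  "N_step sig A N V st st' \<Longrightarrow> N_invariant sig A N X0 t0 s0 st \<Longrightarrow> N_invariant sig A N X0 t0 s0 st'"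
proof (induction rule: N_step.induct)
  case Dec_fn
  from Dec_fn.prems Dec_fn.hyps show ?case by (rule N_invariant_Dec_fn)
next
  case Dec_at
  from Dec_at.prems Dec_at.hyps show ?case by (rule N_invariant_Dec_at)
next
  case Abs
  from Abs.prems Abs.hyps show ?case by (rule N_invariant_Abs)
next
  case Sol
  from Sol.prems Sol.hyps(1) show ?case by (rule N_invariant_Sol)
next
  case Mer
  from Mer.prems Mer.hyps(1-3) Mer.hyps(5-8) show ?case by (rule N_invariant_Mer)
qed

lemma N_invariant_rtranclp:
  "(N_step sig A N V)\<^sup>*\<^sup>* st st' \<Longrightarrow> N_invariant sig A N X0 t0 s0 st \<Longrightarrow> N_invariant sig A N X0 t0 s0 st'"
  by (induction rule: rtranclp_induct) (auto intro: N_invariant_step)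

lemma N_invariant_initial:
  assumes "has_sort sig t (var_sort sig X)" "has_sort sig s (var_sort sig X)"
    and "atoms t \<subseteq> A" "atoms s \<subseteq> A"
  shows "N_invariant sig A N X t s ({(X, t, s)}, {}, {}, eps)"
  using assms
  by (simp add: N_invariant_def auts_wf_def ctx_justified_def solutions_instantiate_def
      aut_solution_def eps_def perm_atoms_def)

lemma less_general_of_solutions:
  assumes inj: "inj_on fst S"
    and sorts: "\<And>Y t s. (Y, t, s) \<in> S \<Longrightarrow> has_sort sig (side (t, s)) (var_sort sig Y)"
    and fresh: "\<And>a Y. (a, Y) \<in> \<Gamma> \<Longrightarrow> \<exists>t s. (Y, t, s) \<in> S \<and> fresh N a (side (t, s))"
    and inst: "solutions_instantiate N side S w r"
  shows "less_general sig (\<Gamma>, w) (N, r)"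
proof -
  define \<rho> where "\<rho> Z = (if Z \<in> fst ` S then side (snd (the_inv_into S fst Z)) else Su [] Z)" for Z
  have \<rho>_aut: "\<rho> Y = side (t, s)" if "(Y, t, s) \<in> S" for Y t s
    using the_inv_into_f_f [OF inj that] that by (force simp: \<rho>_def)
  have "sort_subst sig \<rho>"
    unfolding sort_subst_def
  proof
    fix Z
    show "has_sort sig (\<rho> Z) (var_sort sig Z)"
    proof (cases "Z \<in> fst ` S")
      case True
      then obtain t s where "(Z, t, s) \<in> S" by force
      with sorts \<rho>_aut show ?thesis by simp
    next
      case False
      then show ?thesis using has_sort.hs_su [of sig "[]" Z] by (simp add: \<rho>_def wf_perm_def)
    qed
  qed
  moreover have fresh_\<rho>: "\<forall>(a, Z)\<in>\<Gamma>. fresh N a (\<rho> Z)"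
    using fresh \<rho>_aut by fastforce
  moreover have "aeq N (subst \<rho> w) r"
    using inst \<rho>_aut by (simp add: solutions_instantiate_def aut_solution_def aeq_refl)
  ultimately show ?thesis
    using ctx_subst_fresh [OF fresh_\<rho>] respects_ctx_fresh [OF fresh_\<rho>] by (auto simp: less_general_def)
qed

lemma N_invariant_final:
  assumes "N_invariant sig A N X0 t0 s0 ({}, S, \<Gamma>, \<sigma>)"
  shows "A_based_generalization sig A (\<Gamma>, \<sigma> X0) (N, t0) (N, s0)"
proof -
  from assms have inj: "inj_on fst S" and wf: "auts_wf sig A S" and ctx: "ctx_justified A N S \<Gamma>"
    and "atoms (\<sigma> X0) \<subseteq> A"
    and inst: "solutions_instantiate N fst S (\<sigma> X0) t0" "solutions_instantiate N snd S (\<sigma> X0) s0"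
    by (simp_all add: N_invariant_def)
  have "less_general sig (\<Gamma>, \<sigma> X0) (N, t0)"
    by (rule less_general_of_solutions [OF inj _ _ inst(1)])
      (use wf ctx in \<open>fastforce simp: auts_wf_def ctx_justified_def\<close>)+
  moreover have "less_general sig (\<Gamma>, \<sigma> X0) (N, s0)"
    by (rule less_general_of_solutions [OF inj _ _ inst(2)])
      (use wf ctx in \<open>fastforce simp: auts_wf_def ctx_justified_def\<close>)+
  moreover from ctx have "ctx_based A \<Gamma>"
    by (force simp: ctx_justified_def ctx_based_def)
  ultimately show ?thesis
    using \<open>atoms (\<sigma> X0) \<subseteq> A\<close> by (simp add: A_based_generalization_def term_based_def)
qed

theorem theorem3:
  fixes sig :: "('a,'as,'ds,'v,'f) nsig"
    and A :: "'a set" and N :: "('a,'v) fctx"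
    and t s :: "('a,'v,'f) trm" and \<tau> :: "('as,'ds) srt" and X :: 'v
  assumes "finite A"
    and "finite N"
    and "has_sort sig t \<tau>" and "has_sort sig s \<tau>"
    and "term_based A t" and "term_based A s" and "ctx_based A N"
    and "var_sort sig X = \<tau>"
    and "X \<notin> vars t \<union> vars s \<union> snd ` N"
    and "(N_step sig A N (insert X (vars t \<union> vars s \<union> snd ` N)))\<^sup>+\<^sup>+
           ({(X, t, s)}, {}, {}, eps) ({}, S, \<Gamma>, \<sigma>)"
  shows "A_based_generalization sig A (\<Gamma>, subst \<sigma> (Su [] X)) (N, t) (N, s)"
proof -
  have "N_invariant sig A N X t s ({(X, t, s)}, {}, {}, eps)"
    using assms(3-6,8) by (intro N_invariant_initial) (simp_all add: term_based_def)
  with tranclp_into_rtranclp [OF assms(10)] have "N_invariant sig A N X t s ({}, S, \<Gamma>, \<sigma>)"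
    by (rule N_invariant_rtranclp)
  then show ?thesis
    by (simp add: N_invariant_final)
qed

end
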